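(* Let $A=(a_1,\dots,a_p)$ and $B=(b_1,\dots,b_q)$ be finite lists of voids (notation in the context) ordered by nondecreasing start time, i.e. $S(a_1)\le S(a_2)\le\dots\le S(a_p)$ and $S(b_1)\le\dots\le S(b_q)$. Assume that at least one element of $A$ and at least one element of $B$ has finish time $+\infty$. Fix a real number $T_e$ and a required length $\ell>0$. Run the modified CEVF search: start with the pair $(a,b)=(a_1,b_1)$; while $L_{T_e}(a\cap b)<\ell$, replace $a=a_i$ by $a_{i+1}$ if $F(a)\le F(b)$, and otherwise replace $b=b_j$ by $b_{j+1}$; when $L_{T_e}(a\cap b)\ge \ell$, stop and output the pair $(a,b)$ (the "scheduling void" is $a\cap b$). Then: (i) the procedure never runs past the end of either list and terminates after inspecting at most $p+q-1$ pairs; (ii) the output pair $(a^*,b^* )$ is feasible, i.e. $L_{T_e}(a^*\cap b^* )\ge \ell$, and it is optimal: for every pair $(a_i,b_j)\in A\times B$ with $L_{T_e}(a_i\cap b_j)\ge\ell$ one has $S_{T_e}(a^*\cap b^* )\le S_{T_e}(a_i\cap b_j)$. In particular, in the network setting where $A=V^{Rx}$ is the set of all receiver voids (with $p\le MN+R$) and $B=V^G_x$ is the set of group voids of group $x$ (with $q\le N+1$), the algorithm finds the void with the earliest start time satisfying the length criterion in at most $N+MN+R$ steps, so its complexity is $O(MN)$ when $R,N\ll MN$.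
   Context: A void is a time interval $X$ with a start time $S(X)\in\mathbb{R}$ and a finish time $F(X)\in\mathbb{R}\cup\{+\infty\}$, $F(X)\ge S(X)$. For two voids $a,b$ and an earliest admissible time $T_e$, their (constrained) intersection $a\cap b$ has start $S_{T_e}(a\cap b)=\max(T_e,S(a),S(b))$, finish $F(a\cap b)=\min(F(a),F(b))$, and length $L_{T_e}(a\cap b)=F(a\cap b)-S_{T_e}(a\cap b)$ (which is $+\infty$ when both finish times are $+\infty$). A pair $(a,b)$ is feasible if $L_{T_e}(a\cap b)\ge \ell$, where $\ell=g/l+T_{grd}$ is the time needed to transmit the granted $g$ bytes at link rate $l$ plus a guard/tuning time $T_{grd}$. Network setting: an optical line terminal with $R$ receivers serves $M$ groups of $N$ optical network units each ($MN$ units in total). A receiver void is a maximal time interval in which no upstream transmission is scheduled on a given receiver; $V^{Rx}$ is the collection of receiver voids of all receivers, each receiver having one "horizon" void with finish time $+\infty$. A group void of group $x$ is a maximal interval during which no unit of group $x$ is scheduled to transmit; $V^G_x$ is their collection, including one horizon void with finish time $+\infty$. $T_e=t+rtt_{c,d}$ is the current time plus the round-trip time of the requesting unit. *)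

theory Defs
  imports Complex_Main "HOL-Library.Extended_Real"
begin

text \<open>A void is a pair (start, finish) with start a real number and finish in
  the extended reals (finish = \<infinity> for horizon voids).\<close>
type_synonym void = "real \<times> ereal"

definition vS :: "void \<Rightarrow> real" where "vS X = fst X"
definition vF :: "void \<Rightarrow> ereal" where "vF X = snd X"

definition valid_void :: "void \<Rightarrow> bool" where
  "valid_void X \<longleftrightarrow> ereal (vS X) \<le> vF X"

definition S_int :: "real \<Rightarrow> void \<Rightarrow> void \<Rightarrow> real" where
  "S_int Te a b = max Te (max (vS a) (vS b))"

definition F_int :: "void \<Rightarrow> void \<Rightarrow> ereal" where
  "F_int a b = min (vF a) (vF b)"

definition L_int :: "real \<Rightarrow> void \<Rightarrow> void \<Rightarrow> ereal" where
  "L_int Te a b = F_int a b - ereal (S_int Te a b)"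

definition feasible :: "real \<Rightarrow> real \<Rightarrow> void \<Rightarrow> void \<Rightarrow> bool" where
  "feasible Te l a b \<longleftrightarrow> L_int Te a b \<ge> ereal l"

text \<open>One step of the modified CEVF search on index pairs (0-based).
  If the current pair is feasible the search has stopped (fixed point).\<close>
definition cevf_step ::
  "void list \<Rightarrow> void list \<Rightarrow> real \<Rightarrow> real \<Rightarrow> nat \<times> nat \<Rightarrow> nat \<times> nat" where
  "cevf_step A B Te l ij =
     (let i = fst ij; j = snd ij in
      if feasible Te l (A ! i) (B ! j) then (i, j)
      else if vF (A ! i) \<le> vF (B ! j) then (Suc i, j)
      else (i, Suc j))"

definition cevf_state ::
  "void list \<Rightarrow> void list \<Rightarrow> real \<Rightarrow> real \<Rightarrow> nat \<Rightarrow> nat \<times> nat" where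
  "cevf_state A B Te l k = (cevf_step A B Te l ^^ k) (0, 0)"

end

theory Submission
  imports Defs
begin

text \<open>If F(a) \<le> F(b) for an infeasible pair (a, b), then a is infeasible with every later b'
  as well, since the intersection with b' finishes no later and starts no earlier; symmetrically
  for b. So the search discards the void finishing first, and every pair it skips is infeasible.
  It never passes a horizon void, because two horizon voids always form a feasible pair; hence it
  stops after at most p + q - 1 pairs, at a feasible pair whose indices are componentwise below
  those of every feasible pair, which by sortedness has the earliest start.\<close>

lemma L_int_mono:
  assumes "F_int a' b' \<le> F_int a b" and "S_int Te a b \<le> S_int Te a' b'"
  shows "L_int Te a' b' \<le> L_int Te a b"
  using assms unfolding L_int_def by (cases "F_int a' b'"; cases "F_int a b") auto

lemma not_feasible_later_right:
  assumes "\<not> feasible Te l a b" and "vF a \<le> vF b" and "vS b \<le> vS b'"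
  shows "\<not> feasible Te l a b'"
proof -
  have "L_int Te a b' \<le> L_int Te a b"
    by (rule L_int_mono) (use assms(2,3) in \<open>auto simp: F_int_def S_int_def\<close>)
  with assms(1) show ?thesis unfolding feasible_def by auto
qed

lemma not_feasible_later_left:
  assumes "\<not> feasible Te l a b" and "vF b \<le> vF a" and "vS a \<le> vS a'"
  shows "\<not> feasible Te l a' b"
proof -
  have "L_int Te a' b \<le> L_int Te a b"
    by (rule L_int_mono) (use assms(2,3) in \<open>auto simp: F_int_def S_int_def\<close>)
  with assms(1) show ?thesis unfolding feasible_def by auto
qed

lemma feasible_horizons:
  "vF a = \<infinity> \<Longrightarrow> vF b = \<infinity> \<Longrightarrow> feasible Te l a b"
  unfolding feasible_def L_int_def F_int_def by simp

locale cevf_search =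
  fixes A B :: "void list" and Te l :: real
  assumes sorted_A: "sorted (map vS A)" and sorted_B: "sorted (map vS B)"
    and horizon_in_A: "\<exists>a\<in>set A. vF a = \<infinity>" and horizon_in_B: "\<exists>b\<in>set B. vF b = \<infinity>"
begin

abbreviation state :: "nat \<Rightarrow> nat \<times> nat" where
  "state \<equiv> cevf_state A B Te l"

abbreviation feasible_at :: "nat \<times> nat \<Rightarrow> bool" where
  "feasible_at ij \<equiv> feasible Te l (A ! fst ij) (B ! snd ij)"

definition hA :: nat where "hA = (LEAST i. i < length A \<and> vF (A ! i) = \<infinity>)"
definition hB :: nat where "hB = (LEAST j. j < length B \<and> vF (B ! j) = \<infinity>)"

lemma hA: "hA < length A" "vF (A ! hA) = \<infinity>"
proof -
  from horizon_in_A have "\<exists>i. i < length A \<and> vF (A ! i) = \<infinity>" by (metis in_set_conv_nth)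
  from LeastI_ex[OF this] show "hA < length A" "vF (A ! hA) = \<infinity>" unfolding hA_def by auto
qed

lemma hB: "hB < length B" "vF (B ! hB) = \<infinity>"
proof -
  from horizon_in_B have "\<exists>j. j < length B \<and> vF (B ! j) = \<infinity>" by (metis in_set_conv_nth)
  from LeastI_ex[OF this] show "hB < length B" "vF (B ! hB) = \<infinity>" unfolding hB_def by auto
qed

definition passed_infeasible :: "nat \<Rightarrow> nat \<Rightarrow> bool" where
  "passed_infeasible i j \<longleftrightarrow>
     (\<forall>i'<length A. \<forall>j'<length B. i' < i \<or> j' < j \<longrightarrow> \<not> feasible Te l (A ! i') (B ! j'))"

definition search_invariant :: "nat \<times> nat \<Rightarrow> bool" where
  "search_invariant ij \<longleftrightarrow> fst ij \<le> hA \<and> snd ij \<le> hB \<and> passed_infeasible (fst ij) (snd ij)"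

lemma passed_infeasible_Suc_left:
  assumes "passed_infeasible i j" and "\<not> feasible Te l (A ! i) (B ! j)"
    and "vF (A ! i) \<le> vF (B ! j)"
  shows "passed_infeasible (Suc i) j"
  unfolding passed_infeasible_def
proof (intro allI impI)
  fix i' j' assume bounds: "i' < length A" "j' < length B" and "i' < Suc i \<or> j' < j"
  show "\<not> feasible Te l (A ! i') (B ! j')"
  proof (cases "i' < i \<or> j' < j")
    case True
    then show ?thesis using assms(1) bounds unfolding passed_infeasible_def by blast
  next
    case False
    with \<open>i' < Suc i \<or> j' < j\<close> have "i' = i" "j \<le> j'" by auto
    moreover have "vS (B ! j) \<le> vS (B ! j')"
      using sorted_nth_mono[OF sorted_B, of j j'] \<open>j \<le> j'\<close> bounds by simp
    ultimately show ?thesis using not_feasible_later_right[OF assms(2,3)] by simp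
  qed
qed

lemma passed_infeasible_Suc_right:
  assumes "passed_infeasible i j" and "\<not> feasible Te l (A ! i) (B ! j)"
    and "vF (B ! j) \<le> vF (A ! i)"
  shows "passed_infeasible i (Suc j)"
  unfolding passed_infeasible_def
proof (intro allI impI)
  fix i' j' assume bounds: "i' < length A" "j' < length B" and "i' < i \<or> j' < Suc j"
  show "\<not> feasible Te l (A ! i') (B ! j')"
  proof (cases "i' < i \<or> j' < j")
    case True
    then show ?thesis using assms(1) bounds unfolding passed_infeasible_def by blast
  next
    case False
    with \<open>i' < i \<or> j' < Suc j\<close> have "j' = j" "i \<le> i'" by auto
    moreover have "vS (A ! i) \<le> vS (A ! i')"
      using sorted_nth_mono[OF sorted_A, of i i'] \<open>i \<le> i'\<close> bounds by simp
    ultimately show ?thesis using not_feasible_later_left[OF assms(2,3)] by simp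
  qed
qed

lemma search_invariant_step:
  assumes inv: "search_invariant (i, j)" and infeasible: "\<not> feasible Te l (A ! i) (B ! j)"
  shows "search_invariant (cevf_step A B Te l (i, j)) \<and>
         fst (cevf_step A B Te l (i, j)) + snd (cevf_step A B Te l (i, j)) = Suc (i + j)"
proof -
  from inv have "i \<le> hA" "j \<le> hB" and passed: "passed_infeasible i j"
    unfolding search_invariant_def by auto
  show ?thesis
  proof (cases "vF (A ! i) \<le> vF (B ! j)")
    case True
    have "i \<noteq> hA"
      using True infeasible feasible_horizons[of "A ! i" "B ! j"] hA(2) by (auto simp: top_unique)
    with \<open>i \<le> hA\<close> \<open>j \<le> hB\<close> passed_infeasible_Suc_left[OF passed infeasible True] show ?thesis
      using infeasible True by (simp add: cevf_step_def search_invariant_def)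
  next
    case False
    then have earlier_B: "vF (B ! j) \<le> vF (A ! i)" by simp
    have "j \<noteq> hB"
      using earlier_B infeasible feasible_horizons[of "A ! i" "B ! j"] hB(2) by (auto simp: top_unique)
    with \<open>i \<le> hA\<close> \<open>j \<le> hB\<close> passed_infeasible_Suc_right[OF passed infeasible earlier_B] show ?thesis
      using infeasible False by (simp add: cevf_step_def search_invariant_def)
  qed
qed

lemma search_invariant_state:
  assumes "\<forall>m'<m. \<not> feasible_at (state m')"
  shows "search_invariant (state m) \<and> fst (state m) + snd (state m) = m"
  using assms
proof (induction m)
  case 0
  show ?case by (simp add: cevf_state_def search_invariant_def passed_infeasible_def)
next
  case (Suc m)
  then have "search_invariant (state m)" "fst (state m) + snd (state m) = m"
    and "\<not> feasible_at (state m)" by auto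
  then show ?case
    using search_invariant_step[of "fst (state m)" "snd (state m)"]
    by (simp add: cevf_state_def)
qed

lemma search_invariant_bounds:
  assumes "search_invariant ij"
  shows "fst ij < length A" "snd ij < length B" "fst ij + snd ij \<le> hA + hB"
  using assms hA(1) hB(1) unfolding search_invariant_def by auto

lemma search_stops: "\<exists>m. feasible_at (state m)"
proof (rule ccontr)
  assume "\<nexists>m. feasible_at (state m)"
  then have "search_invariant (state (Suc (hA + hB)))"
    and "fst (state (Suc (hA + hB))) + snd (state (Suc (hA + hB))) = Suc (hA + hB)"
    using search_invariant_state by blast+
  then show False using search_invariant_bounds(3) by fastforce
qed

lemma earliest_start:
  assumes "passed_infeasible i j" and "i < length A" "j < length B"
    and "i' < length A" "j' < length B" and "feasible Te l (A ! i') (B ! j')"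
  shows "S_int Te (A ! i) (B ! j) \<le> S_int Te (A ! i') (B ! j')"
proof -
  from assms(1,4-6) have "i \<le> i'" "j \<le> j'"
    unfolding passed_infeasible_def by (meson not_le)+
  then have "vS (A ! i) \<le> vS (A ! i')" "vS (B ! j) \<le> vS (B ! j')"
    using sorted_nth_mono[OF sorted_A, of i i'] sorted_nth_mono[OF sorted_B, of j j'] assms(4,5)
    by auto
  then show ?thesis by (auto simp: S_int_def)
qed

lemma search_correct:
  defines "k \<equiv> LEAST m. feasible_at (state m)"
  shows "k + 1 \<le> length A + length B - 1"
    and "\<forall>m\<le>k. fst (state m) < length A \<and> snd (state m) < length B"
    and "\<forall>m<k. \<not> feasible_at (state m)"
    and "feasible_at (state k)"
    and "\<forall>i'<length A. \<forall>j'<length B. feasible Te l (A ! i') (B ! j') \<longrightarrow>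
           S_int Te (A ! fst (state k)) (B ! snd (state k)) \<le> S_int Te (A ! i') (B ! j')"
proof -
  show feasible_k: "feasible_at (state k)"
    unfolding k_def using search_stops by (rule LeastI_ex)
  show before_k: "\<forall>m<k. \<not> feasible_at (state m)"
    unfolding k_def using not_less_Least by blast
  have inv: "search_invariant (state m)" and sum: "fst (state m) + snd (state m) = m"
    if "m \<le> k" for m
    using search_invariant_state[of m] before_k that by auto
  show "\<forall>m\<le>k. fst (state m) < length A \<and> snd (state m) < length B"
    using inv search_invariant_bounds by blast
  have "k \<le> hA + hB"
    using search_invariant_bounds(3)[OF inv] sum by (metis order_refl)
  then show "k + 1 \<le> length A + length B - 1"
    using hA(1) hB(1) by linarith
  show "\<forall>i'<length A. \<forall>j'<length B. feasible Te l (A ! i') (B ! j') \<longrightarrow>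
          S_int Te (A ! fst (state k)) (B ! snd (state k)) \<le> S_int Te (A ! i') (B ! j')"
    using earliest_start inv[of k] search_invariant_bounds[OF inv[of k]]
    unfolding search_invariant_def by blast
qed

end

theorem theorem1:
  fixes A B :: "void list" and Te l :: real
  assumes validA: "\<forall>a\<in>set A. valid_void a"
    and validB: "\<forall>b\<in>set B. valid_void b"
    and sortedA: "sorted (map vS A)"
    and sortedB: "sorted (map vS B)"
    and horA: "\<exists>a\<in>set A. vF a = \<infinity>"
    and horB: "\<exists>b\<in>set B. vF b = \<infinity>"
    and lpos: "l > 0"
  shows "\<exists>k.
     k + 1 \<le> length A + length B - 1
   \<and> (\<forall>m\<le>k. fst (cevf_state A B Te l m) < length A \<and> snd (cevf_state A B Te l m) < length B)
   \<and> (\<forall>m<k. \<not> feasible Te l (A ! fst (cevf_state A B Te l m)) (B ! snd (cevf_state A B Te l m)))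
   \<and> (let i = fst (cevf_state A B Te l k); j = snd (cevf_state A B Te l k) in
        feasible Te l (A ! i) (B ! j)
      \<and> (\<forall>i'<length A. \<forall>j'<length B. feasible Te l (A ! i') (B ! j') \<longrightarrow>
            S_int Te (A ! i) (B ! j) \<le> S_int Te (A ! i') (B ! j')))
   \<and> (\<forall>M N R :: nat. length A \<le> M * N + R \<and> length B \<le> N + 1 \<longrightarrow> k + 1 \<le> N + M * N + R)"
proof -
  interpret cevf_search A B Te l
    using sortedA sortedB horA horB by unfold_locales
  define k where "k = (LEAST m. feasible_at (state m))"
  note correct = search_correct[folded k_def]
  have "\<forall>M N R :: nat. length A \<le> M * N + R \<and> length B \<le> N + 1 \<longrightarrow> k + 1 \<le> N + M * N + R"
    using correct(1) by auto
  with correct show ?thesis by (auto simp: Let_def)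
qed

end
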